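(* Let $X$ be an amoebot structure with $n$ amoebots satisfying the standing assumptions below, and let $S_1,S_2\subseteq X$ be non-empty. Suppose an $S_1$-shortest path forest and an $S_2$-shortest path forest are given (each amoebot knows whether it is in $S_1$, in $S_2$, and its parent in each forest). There is an algorithm in the reconfigurable circuit model (the merging algorithm) that computes an $(S_1\cup S_2)$-shortest path forest within $O(\log n)$ rounds.
   Context: Geometric amoebot model with reconfigurable circuits: $G_\Delta$ is the infinite regular triangular grid graph; an amoebot structure is a finite set $X$ of grid nodes, $n=|X|$, each occupied by an anonymous constant-memory amoebot, with $G_X=(X,E_X)$ the induced subgraph, assumed connected. Each edge of $G_X$ is replaced by a constant number of external links with pins at both endpoints (labeling agreed by neighbors); each amoebot partitions its pins into partition sets; circuits are connected components of the graph on all partition sets joined by external links. In synchronous rounds every amoebot may update its state, change its partition and beep on partition sets; beeps are received at the start of the next round by all partition sets of the same circuit (without sender identity or count). Standing assumptions: $X$ has no holes (the subgraph induced by $V_\Delta\setminus X$ is connected), amoebots share compass orientation and chirality, and a unique leader is known. An $S$-shortest path forest is a family of rooted trees $T_s=(V_s,E_s)$, $s\in S$, $V_s\subseteq X$, $E_s\subseteq E_X$, rooted at $s$, with pairwise disjoint $V_s$ covering $X$, such that for every $u\in V_s$ the tree path from $s$ to $u$ is a shortest path in $G_X$ and $s$ is a closest amoebot of $S$ to $u$; computing it means every amoebot not in $S$ knows its parent. *)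

theory Defs
  imports Complex_Main
begin

section \<open>Triangular grid (axial coordinates)\<close>

type_synonym node = "int \<times> int"

text \<open>Six compass directions 0..5 (shared orientation and chirality).\<close>
definition delta :: "nat \<Rightarrow> int \<times> int" where
  "delta d = (if d = 0 then (1,0) else if d = 1 then (0,1) else if d = 2 then (-1,1)
              else if d = 3 then (-1,0) else if d = 4 then (0,-1) else (1,-1))"

definition nbr :: "node \<Rightarrow> nat \<Rightarrow> node" where
  "nbr u d = (fst u + fst (delta d), snd u + snd (delta d))"

definition opp :: "nat \<Rightarrow> nat" where
  "opp d = (d + 3) mod 6"

definition grid_adj :: "node \<Rightarrow> node \<Rightarrow> bool" where
  "grid_adj u v \<longleftrightarrow> (\<exists>d<6. v = nbr u d)"

definition dir_of :: "node \<Rightarrow> node \<Rightarrow> nat" where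
  "dir_of u v = (SOME d. d < 6 \<and> nbr u d = v)"

definition walk_in :: "node set \<Rightarrow> node list \<Rightarrow> bool" where
  "walk_in A xs \<longleftrightarrow> xs \<noteq> [] \<and> set xs \<subseteq> A \<and>
     (\<forall>i. Suc i < length xs \<longrightarrow> grid_adj (xs ! i) (xs ! Suc i))"

definition connected_in :: "node set \<Rightarrow> bool" where
  "connected_in A \<longleftrightarrow> (\<forall>u\<in>A. \<forall>v\<in>A. \<exists>xs. walk_in A xs \<and> hd xs = u \<and> last xs = v)"

definition dist_in :: "node set \<Rightarrow> node \<Rightarrow> node \<Rightarrow> nat" where
  "dist_in A u v = (LEAST k. \<exists>xs. walk_in A xs \<and> hd xs = u \<and> last xs = v \<and> length xs = Suc k)"

definition amoebot_structure :: "node set \<Rightarrow> bool" where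
  "amoebot_structure X \<longleftrightarrow> finite X \<and> X \<noteq> {} \<and> connected_in X"

definition no_holes :: "node set \<Rightarrow> bool" where
  "no_holes X \<longleftrightarrow> connected_in (UNIV - X)"

definition is_SPF :: "node set \<Rightarrow> node set \<Rightarrow> (node \<Rightarrow> node) \<Rightarrow> bool" where
  "is_SPF X S par \<longleftrightarrow> (\<forall>u\<in>X - S. par u \<in> X \<and> grid_adj u (par u) \<and>
     (\<exists>k s. s \<in> S \<and> (par ^^ k) u = s \<and> (\<forall>j<k. (par ^^ j) u \<notin> S) \<and>
            k = dist_in X u s \<and> (\<forall>s'\<in>S. dist_in X u s \<le> dist_in X u s')))"

text \<open>Local input of an amoebot: occupied neighbour directions, membership in S1, S2,
  parent direction in the S1-forest (None if in S1), in the S2-forest, and leader flag.\<close>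
type_synonym local_inp = "nat set \<times> bool \<times> bool \<times> nat option \<times> nat option \<times> bool"

text \<open>An algorithm: finite state set Q (constant memory), number of external links per edge,
  initial state from local input, pin partition (pin (d,i) mapped to the label of its
  partition set), set of partition-set labels beeped on, transition on received labels,
  termination flag and output parent direction. All amoebots run the same algorithm
  (anonymous).\<close>
record alg =
  Q :: "nat set"
  npins :: nat
  init :: "local_inp \<Rightarrow> nat"
  part :: "nat \<Rightarrow> nat \<times> nat \<Rightarrow> nat"
  beep :: "nat \<Rightarrow> nat set"
  trans :: "nat \<Rightarrow> nat set \<Rightarrow> nat"
  final :: "nat \<Rightarrow> bool"
  outdir :: "nat \<Rightarrow> nat"

definition valid_alg :: "alg \<Rightarrow> bool" where
  "valid_alg A \<longleftrightarrow> finite (Q A) \<and> npins A \<ge> 1 \<and> (\<forall>x. init A x \<in> Q A) \<and>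
     (\<forall>q\<in>Q A. \<forall>R. trans A q R \<in> Q A)"

definition valid_pin :: "alg \<Rightarrow> node set \<Rightarrow> node \<Rightarrow> nat \<times> nat \<Rightarrow> bool" where
  "valid_pin A X u p \<longleftrightarrow> u \<in> X \<and> fst p < 6 \<and> nbr u (fst p) \<in> X \<and> snd p < npins A"

text \<open>Pins are joined if they lie in the same partition set of the same amoebot, or if they
  are the two endpoints of the same external link (link i of edge in direction d of u
  is link i of edge in direction opp d of the neighbour).\<close>
definition pin_step :: "alg \<Rightarrow> node set \<Rightarrow> (node \<Rightarrow> nat) \<Rightarrow>
    node \<times> (nat \<times> nat) \<Rightarrow> node \<times> (nat \<times> nat) \<Rightarrow> bool" where
  "pin_step A X \<sigma> a b \<longleftrightarrow> valid_pin A X (fst a) (snd a) \<and> valid_pin A X (fst b) (snd b) \<and>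
     ((fst a = fst b \<and> part A (\<sigma> (fst a)) (snd a) = part A (\<sigma> (fst a)) (snd b)) \<or>
      (fst b = nbr (fst a) (fst (snd a)) \<and> fst (snd b) = opp (fst (snd a)) \<and> snd (snd b) = snd (snd a)))"

definition received :: "alg \<Rightarrow> node set \<Rightarrow> (node \<Rightarrow> nat) \<Rightarrow> node \<Rightarrow> nat set" where
  "received A X \<sigma> u = {l. \<exists>p. valid_pin A X u p \<and> part A (\<sigma> u) p = l \<and>
      (\<exists>v q. (pin_step A X \<sigma>)\<^sup>*\<^sup>* (u, p) (v, q) \<and> part A (\<sigma> v) q \<in> beep A (\<sigma> v))}"

primrec run :: "alg \<Rightarrow> node set \<Rightarrow> (node \<Rightarrow> local_inp) \<Rightarrow> nat \<Rightarrow> node \<Rightarrow> nat" where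
  "run A X inp 0 = (\<lambda>u. init A (inp u))"
| "run A X inp (Suc t) = (\<lambda>u. trans A (run A X inp t u) (received A X (run A X inp t) u))"

definition local_input :: "node set \<Rightarrow> node set \<Rightarrow> node set \<Rightarrow> (node \<Rightarrow> node) \<Rightarrow>
    (node \<Rightarrow> node) \<Rightarrow> node \<Rightarrow> node \<Rightarrow> local_inp" where
  "local_input X S1 S2 p1 p2 ldr u =
     ({d. d < 6 \<and> nbr u d \<in> X}, u \<in> S1, u \<in> S2,
      (if u \<in> S1 then None else Some (dir_of u (p1 u))),
      (if u \<in> S2 then None else Some (dir_of u (p2 u))),
      u = ldr)"

end

theory Submission
  imports Defs "HOL-Library.Countable"
begin

text \<open>Following the parent in the forest in which an amoebot is shallower yields an
  (S1 \<union> S2)-shortest path forest: that parent is one step closer to its root, and by the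
  triangle inequality the depth in the other forest drops by at most one along the same edge.
  So it suffices that every amoebot compares its two depths, which the algorithm does bit by bit,
  least significant bit first, one bit per round.

  In round t an amoebot is active in a forest if 2 ^ t divides its depth there. Each forest is
  wired as two lanes running along all tree paths, crossing exactly at the active amoebots. The
  roots beep on lane 0, and the beep arrives on lane 0 of an amoebot of depth d iff the number
  of active amoebots on its path to the root, d div 2 ^ t, is even: the amoebot learns bit t of d.
  Active non-roots also beep on a global circuit. The first silent round is the first t with all
  depths below 2 ^ t, so it comes after at most log2 n + 1 rounds, and from then on comparing the
  low t bits is comparing the depths.\<close>

lemma walk_in_Cons_Cons:
  "walk_in A (x # y # ys) \<longleftrightarrow> x \<in> A \<and> grid_adj x y \<and> walk_in A (y # ys)"
proof
  assume w: "walk_in A (x # y # ys)"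
  then have step: "\<And>i. Suc i < length (x # y # ys) \<Longrightarrow>
      grid_adj ((x # y # ys) ! i) ((x # y # ys) ! Suc i)"
    unfolding walk_in_def by blast
  have "grid_adj x y" using step[of 0] by simp
  moreover have "walk_in A (y # ys)"
    using w step[of "Suc _"] unfolding walk_in_def by auto
  ultimately show "x \<in> A \<and> grid_adj x y \<and> walk_in A (y # ys)"
    using w unfolding walk_in_def by simp
next
  assume "x \<in> A \<and> grid_adj x y \<and> walk_in A (y # ys)"
  then show "walk_in A (x # y # ys)"
    unfolding walk_in_def by (auto simp: nth_Cons split: nat.splits)
qed

lemma dist_in_le_walk:
  assumes "walk_in A xs" "hd xs = u" "last xs = v"
  shows "dist_in A u v \<le> length xs - 1"
  unfolding dist_in_def
  by (rule Least_le) (use assms in \<open>auto simp: walk_in_def intro!: exI[of _ xs]\<close>)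

lemma dist_in_shortest_walk:
  assumes "connected_in A" "u \<in> A" "v \<in> A"
  obtains xs where "walk_in A xs" "hd xs = u" "last xs = v" "length xs = Suc (dist_in A u v)"
proof -
  obtain xs where "walk_in A xs" "hd xs = u" "last xs = v"
    using assms unfolding connected_in_def by blast
  then have "\<exists>k xs. walk_in A xs \<and> hd xs = u \<and> last xs = v \<and> length xs = Suc k"
    by (intro exI[of _ "length xs - 1"] exI[of _ xs]) (auto simp: walk_in_def)
  then have "\<exists>xs. walk_in A xs \<and> hd xs = u \<and> last xs = v \<and> length xs = Suc (dist_in A u v)"
    unfolding dist_in_def by (rule LeastI_ex)
  then show thesis
    using that by blast
qed

lemma dist_in_self: "u \<in> A \<Longrightarrow> dist_in A u u = 0"
  using dist_in_le_walk[of A "[u]"] by (simp add: walk_in_def)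

lemma dist_in_grid_adj_le:
  assumes "connected_in A" "u \<in> A" "v \<in> A" "s \<in> A" "grid_adj u v"
  shows "dist_in A u s \<le> Suc (dist_in A v s)"
proof -
  obtain ys where ys: "walk_in A ys" "hd ys = v" "last ys = s" "length ys = Suc (dist_in A v s)"
    using dist_in_shortest_walk assms(1,3,4) by blast
  then obtain y ys' where ys_Cons: "ys = y # ys'" by (cases ys) auto
  then have "walk_in A (u # ys)"
    using ys assms(2,5) walk_in_Cons_Cons by simp
  then have "dist_in A u s \<le> length (u # ys) - 1"
    by (rule dist_in_le_walk) (use ys ys_Cons in simp_all)
  then show ?thesis
    using ys(4) by simp
qed

section \<open>Depths in shortest path forests\<close>

definition forest_depth :: "node set \<Rightarrow> (node \<Rightarrow> node) \<Rightarrow> node \<Rightarrow> nat" where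
  "forest_depth S par u = (LEAST k. (par ^^ k) u \<in> S)"

lemma forest_depth_root: "u \<in> S \<Longrightarrow> forest_depth S par u = 0"
  unfolding forest_depth_def by (rule Least_equality) auto

lemma forest_depth_Suc:
  assumes "(par ^^ k) u \<in> S" "u \<notin> S"
  shows "forest_depth S par u = Suc (forest_depth S par (par u))"
proof -
  have "(LEAST k. (par ^^ k) u \<in> S) = Suc (LEAST k. (par ^^ Suc k) u \<in> S)"
    by (rule Least_Suc) (use assms in auto)
  then show ?thesis
    unfolding forest_depth_def by (simp only: funpow_Suc_right o_apply)
qed

context
  fixes X S par
  assumes spf: "is_SPF X S par"
begin

lemma is_SPF_parent: "u \<in> X - S \<Longrightarrow> par u \<in> X \<and> grid_adj u (par u)"
  using spf unfolding is_SPF_def by blast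

lemma is_SPF_forest_depth:
  assumes "u \<in> X - S"
  shows "(par ^^ forest_depth S par u) u \<in> S"
    and "forest_depth S par u = dist_in X u ((par ^^ forest_depth S par u) u)"
    and "\<forall>s\<in>S. forest_depth S par u \<le> dist_in X u s"
proof -
  obtain k s where ks: "s \<in> S" "(par ^^ k) u = s" "\<forall>j<k. (par ^^ j) u \<notin> S"
      "k = dist_in X u s" "\<forall>s'\<in>S. dist_in X u s \<le> dist_in X u s'"
    using spf assms unfolding is_SPF_def by blast
  have "forest_depth S par u = k"
    unfolding forest_depth_def by (rule Least_equality) (use ks in \<open>auto simp: not_le[symmetric]\<close>)
  then show "(par ^^ forest_depth S par u) u \<in> S"
    and "forest_depth S par u = dist_in X u ((par ^^ forest_depth S par u) u)"
    and "\<forall>s\<in>S. forest_depth S par u \<le> dist_in X u s"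
    using ks by auto
qed

lemma forest_depth_parent:
  assumes "u \<in> X - S"
  shows "forest_depth S par u = Suc (forest_depth S par (par u))"
  using forest_depth_Suc is_SPF_forest_depth(1)[OF assms] assms by blast

lemma forest_depth_eq_0_iff: "u \<in> X \<Longrightarrow> forest_depth S par u = 0 \<longleftrightarrow> u \<in> S"
  using forest_depth_root forest_depth_parent by (cases "u \<in> S") auto

lemma forest_depth_le_dist_in:
  assumes "u \<in> X" "s \<in> S"
  shows "forest_depth S par u \<le> dist_in X u s"
  using is_SPF_forest_depth(3) assms forest_depth_root by (cases "u \<in> S") auto

lemma forest_depth_eq_dist_in:
  assumes "u \<in> X"
  obtains s where "s \<in> S" "dist_in X u s = forest_depth S par u"
proof (cases "u \<in> S")
  case True
  then show ?thesis using that dist_in_self forest_depth_root assms by metis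
next
  case False
  then show ?thesis using that is_SPF_forest_depth(1,2) assms by (metis DiffI)
qed

lemma forest_depth_funpow:
  assumes "u \<in> X" "j \<le> forest_depth S par u"
  shows "(par ^^ j) u \<in> X \<and> forest_depth S par ((par ^^ j) u) = forest_depth S par u - j"
  using assms(2)
proof (induction j)
  case 0
  then show ?case using assms(1) by simp
next
  case (Suc j)
  then have IH: "(par ^^ j) u \<in> X" "forest_depth S par ((par ^^ j) u) = forest_depth S par u - j"
    by auto
  with Suc.prems have "(par ^^ j) u \<in> X - S"
    using forest_depth_root by fastforce
  then show ?case
    using IH is_SPF_parent forest_depth_parent by fastforce
qed

lemma forest_depth_less_card:
  assumes "finite X" "u \<in> X"
  shows "forest_depth S par u < card X"
proof -
  let ?path = "\<lambda>j. (par ^^ j) u"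
  have "inj_on ?path {0..forest_depth S par u}"
  proof (rule inj_onI)
    fix i j
    assume "i \<in> {0..forest_depth S par u}" "j \<in> {0..forest_depth S par u}" "?path i = ?path j"
    then show "i = j"
      using forest_depth_funpow[OF assms(2), of i] forest_depth_funpow[OF assms(2), of j] by auto
  qed
  moreover have "?path ` {0..forest_depth S par u} \<subseteq> X"
    using forest_depth_funpow[OF assms(2)] by auto
  ultimately have "card {0..forest_depth S par u} \<le> card X"
    using card_inj_on_le assms(1) by blast
  then show ?thesis by simp
qed

lemma forest_depth_grid_adj_le:
  assumes "connected_in X" "S \<subseteq> X" "u \<in> X" "v \<in> X" "grid_adj u v"
  shows "forest_depth S par u \<le> Suc (forest_depth S par v)"
proof -
  obtain s where s: "s \<in> S" "dist_in X v s = forest_depth S par v"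
    using forest_depth_eq_dist_in assms(4) by blast
  have "forest_depth S par u \<le> dist_in X u s"
    using forest_depth_le_dist_in assms(3) s(1) by blast
  also have "\<dots> \<le> Suc (dist_in X v s)"
    using dist_in_grid_adj_le assms s(1) by blast
  finally show ?thesis using s(2) by simp
qed

end

section \<open>Merging two forests\<close>

definition merge_parent ::
    "node set \<Rightarrow> (node \<Rightarrow> node) \<Rightarrow> node set \<Rightarrow> (node \<Rightarrow> node) \<Rightarrow> node \<Rightarrow> node" where
  "merge_parent S1 p1 S2 p2 u =
     (if forest_depth S1 p1 u \<le> forest_depth S2 p2 u then p1 u else p2 u)"

context
  fixes X S1 S2 p1 p2
  assumes conn: "connected_in X" and sub1: "S1 \<subseteq> X" and sub2: "S2 \<subseteq> X"
    and spf1: "is_SPF X S1 p1" and spf2: "is_SPF X S2 p2"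
begin

abbreviation merge_depth :: "node \<Rightarrow> nat" where
  "merge_depth u \<equiv> min (forest_depth S1 p1 u) (forest_depth S2 p2 u)"

abbreviation mpar :: "node \<Rightarrow> node" where
  "mpar \<equiv> merge_parent S1 p1 S2 p2"

lemma merge_depth_eq_0_iff: "u \<in> X \<Longrightarrow> merge_depth u = 0 \<longleftrightarrow> u \<in> S1 \<union> S2"
  using forest_depth_eq_0_iff[OF spf1, of u] forest_depth_eq_0_iff[OF spf2, of u]
  by (auto simp: min_def)

lemma merge_parent_step:
  assumes "u \<in> X - (S1 \<union> S2)"
  shows "mpar u \<in> X \<and> grid_adj u (mpar u) \<and> merge_depth u = Suc (merge_depth (mpar u))"
proof -
  have u: "u \<in> X - S1" "u \<in> X - S2" using assms by auto
  note par1 = is_SPF_parent[OF spf1 u(1)] forest_depth_parent[OF spf1 u(1)]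
  note par2 = is_SPF_parent[OF spf2 u(2)] forest_depth_parent[OF spf2 u(2)]
  have "forest_depth S2 p2 u \<le> Suc (forest_depth S2 p2 (p1 u))"
    using forest_depth_grid_adj_le[OF spf2 conn sub2] par1 u by blast
  moreover have "forest_depth S1 p1 u \<le> Suc (forest_depth S1 p1 (p2 u))"
    using forest_depth_grid_adj_le[OF spf1 conn sub1] par2 u by blast
  ultimately show ?thesis
    using par1 par2 unfolding merge_parent_def by auto
qed

lemma merge_parent_funpow:
  assumes "u \<in> X" "j \<le> merge_depth u"
  shows "(mpar ^^ j) u \<in> X \<and> merge_depth ((mpar ^^ j) u) = merge_depth u - j"
  using assms(2)
proof (induction j)
  case 0
  then show ?case using assms(1) by simp
next
  case (Suc j)
  then have IH: "(mpar ^^ j) u \<in> X" "merge_depth ((mpar ^^ j) u) = merge_depth u - j"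
    by auto
  with Suc.prems have "(mpar ^^ j) u \<in> X - (S1 \<union> S2)"
    using merge_depth_eq_0_iff by fastforce
  then show ?case
    using IH merge_parent_step by fastforce
qed

lemma dist_in_merge_root:
  assumes "u \<in> X"
  shows "dist_in X u ((mpar ^^ merge_depth u) u) \<le> merge_depth u"
  using assms
proof (induction "merge_depth u" arbitrary: u)
  case 0
  then show ?case using dist_in_self by simp
next
  case (Suc n)
  then have u: "u \<in> X - (S1 \<union> S2)" using merge_depth_eq_0_iff by fastforce
  note step = merge_parent_step[OF u]
  let ?s = "(mpar ^^ n) (mpar u)"
  have s: "(mpar ^^ merge_depth u) u = ?s" and "?s \<in> X"
    using Suc.hyps(2) step merge_parent_funpow[of "mpar u" n]
    by (simp_all add: funpow_Suc_right del: funpow.simps)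
  then have "dist_in X u ?s \<le> Suc (dist_in X (mpar u) ?s)"
    using dist_in_grid_adj_le conn step Suc.prems by blast
  also have "\<dots> \<le> Suc n"
    using Suc.hyps step by fastforce
  finally show ?case using s Suc.hyps(2) by simp
qed

lemma is_SPF_merge_parent: "is_SPF X (S1 \<union> S2) mpar"
  unfolding is_SPF_def
proof (intro ballI conjI)
  fix u assume u: "u \<in> X - (S1 \<union> S2)"
  show "mpar u \<in> X" "grid_adj u (mpar u)" using merge_parent_step[OF u] by auto
  let ?k = "merge_depth u"
  let ?s = "(mpar ^^ ?k) u"
  have "?s \<in> X" "merge_depth ?s = 0" using merge_parent_funpow[of u ?k] u by auto
  then have root: "?s \<in> S1 \<union> S2" using merge_depth_eq_0_iff by blast
  have below: "(mpar ^^ j) u \<notin> S1 \<union> S2" if "j < ?k" for j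
    using merge_parent_funpow[of u j] merge_depth_eq_0_iff[of "(mpar ^^ j) u"] u that by auto
  have lower: "?k \<le> dist_in X u s'" if "s' \<in> S1 \<union> S2" for s'
    using that u forest_depth_le_dist_in[OF spf1, of u s'] forest_depth_le_dist_in[OF spf2, of u s']
    by auto
  have "dist_in X u ?s \<le> ?k"
    using dist_in_merge_root u by blast
  then have "dist_in X u ?s = ?k"
    using lower[OF root] by (rule antisym)
  then show "\<exists>k s. s \<in> S1 \<union> S2 \<and> (mpar ^^ k) u = s \<and> (\<forall>j<k. (mpar ^^ j) u \<notin> S1 \<union> S2) \<and>
      k = dist_in X u s \<and> (\<forall>s'\<in>S1 \<union> S2. dist_in X u s \<le> dist_in X u s')"
    using root below lower by (intro exI[of _ ?k] exI[of _ ?s]) auto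
qed

end

lemma is_SPF_cong:
  assumes spf: "is_SPF X S q" and eq: "\<And>u. u \<in> X - S \<Longrightarrow> par u = q u"
  shows "is_SPF X S par"
  unfolding is_SPF_def
proof (intro ballI conjI)
  fix u assume u: "u \<in> X - S"
  obtain k s where ks: "s \<in> S" "(q ^^ k) u = s" "\<forall>j<k. (q ^^ j) u \<notin> S" "k = dist_in X u s"
      "\<forall>s'\<in>S. dist_in X u s \<le> dist_in X u s'"
    using spf u unfolding is_SPF_def by blast
  show "par u \<in> X" "grid_adj u (par u)" using is_SPF_parent[OF spf u] eq[OF u] by auto
  have "(par ^^ j) u = (q ^^ j) u \<and> (q ^^ j) u \<in> X" if "j \<le> k" for j
    using that
  proof (induction j)
    case 0
    then show ?case using u by simp
  next
    case (Suc j)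
    then have "(q ^^ j) u \<in> X - S" "(par ^^ j) u = (q ^^ j) u" using ks(3) by auto
    then show ?case using eq is_SPF_parent[OF spf] by simp
  qed
  then show "\<exists>k s. s \<in> S \<and> (par ^^ k) u = s \<and> (\<forall>j<k. (par ^^ j) u \<notin> S) \<and>
      k = dist_in X u s \<and> (\<forall>s'\<in>S. dist_in X u s \<le> dist_in X u s')"
    using ks by (intro exI[of _ k] exI[of _ s]) auto
qed

lemma bit_Suc_nat_iff: "bit (Suc d) t \<longleftrightarrow> ((2 ^ t dvd Suc d) \<noteq> bit d t)"
proof (cases "2 ^ t dvd Suc d")
  case True
  then have "Suc d div 2 ^ t = Suc (d div 2 ^ t)" by (simp add: div_Suc dvd_eq_mod_eq_0)
  with True show ?thesis by (simp add: bit_iff_odd)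
next
  case False
  then have "Suc d div 2 ^ t = d div 2 ^ t" by (simp add: div_Suc dvd_eq_mod_eq_0)
  with False show ?thesis by (simp add: bit_iff_odd)
qed

lemma exp_Suc_dvd_iff_bit: "(2::nat) ^ Suc t dvd d \<longleftrightarrow> 2 ^ t dvd d \<and> \<not> bit d t"
  unfolding take_bit_eq_0_iff[symmetric] take_bit_Suc_from_most by auto

lemma take_bit_Suc_le_iff:
  "take_bit (Suc t) (x::nat) \<le> take_bit (Suc t) y \<longleftrightarrow>
     (if bit x t = bit y t then take_bit t x \<le> take_bit t y else bit y t)"
proof -
  have low: "take_bit t x < 2 ^ t" "take_bit t y < 2 ^ t" by (simp_all add: take_bit_eq_mod)
  consider "bit x t = bit y t" | "bit x t" "\<not> bit y t" | "\<not> bit x t" "bit y t" by blast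
  then show ?thesis
  proof cases
    case 1
    then show ?thesis by (simp add: take_bit_Suc_from_most)
  next
    case 2
    have "\<not> 2 ^ t + take_bit t x \<le> take_bit t y" using low by linarith
    with 2 show ?thesis by (simp add: take_bit_Suc_from_most)
  next
    case 3
    have "take_bit t x \<le> 2 ^ t + take_bit t y" using low by linarith
    with 3 show ?thesis by (simp add: take_bit_Suc_from_most)
  qed
qed

section \<open>The circuit algorithm\<close>

lemma less_6_cases: "(d::nat) < 6 \<Longrightarrow> d = 0 \<or> d = 1 \<or> d = 2 \<or> d = 3 \<or> d = 4 \<or> d = 5"
  by linarith

lemma nbr_nbr_opp: "d < 6 \<Longrightarrow> nbr (nbr u d) (opp d) = u"
  by (drule less_6_cases, elim disjE) (simp_all add: nbr_def opp_def delta_def)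

lemma opp_less: "opp d < 6"
  unfolding opp_def by simp

lemma dir_of_nbr: "grid_adj u v \<Longrightarrow> dir_of u v < 6 \<and> nbr u (dir_of u v) = v"
  unfolding grid_adj_def dir_of_def by (rule someI_ex) blast

definition side :: "nat \<Rightarrow> nat" where
  "side e = (if e < 3 then 0 else 1)"

lemma side_opp: "e < 6 \<Longrightarrow> side (opp e) = 1 - side e"
  by (drule less_6_cases, elim disjE) (simp_all add: side_def opp_def)

lemma side_less: "side e < 2"
  unfolding side_def by simp

datatype state = State
  (root1: bool) (root2: bool) (pdir1: nat) (pdir2: nat)
  (active1: bool) (active2: bool) (prefer1: bool) (halted: bool)

instance state :: countable
  by countable_datatype

definition is_root :: "nat \<Rightarrow> state \<Rightarrow> bool" where
  "is_root f s = (if f = 0 then root1 s else root2 s)"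

definition par_dir :: "nat \<Rightarrow> state \<Rightarrow> nat" where
  "par_dir f s = (if f = 0 then pdir1 s else pdir2 s)"

definition is_active :: "nat \<Rightarrow> state \<Rightarrow> bool" where
  "is_active f s = (if f = 0 then active1 s else active2 s)"

text \<open>Pin i < 8 of the edge in direction e carries lane i mod 4 div 2 of forest i div 4, pin 8
  the global circuit (label 5). Of the two links of a lane on an edge, the one with i mod 2 = side e
  belongs to the amoebot's own hub 1 + 2 f + L of that lane and the other one to the
  neighbour's hub, as opposite directions have opposite sides. The link towards the parent is
  joined to the own hub as well, with the lanes swapped iff the amoebot is active; all other
  pins are singletons.\<close>
fun label :: "state \<Rightarrow> nat \<times> nat \<Rightarrow> nat" where
  "label s (e, i) =
     (if i < 8 then
        (if i mod 2 = side e then 1 + 2 * (i div 4) + i mod 4 div 2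
         else if \<not> is_root (i div 4) s \<and> e = par_dir (i div 4) s
         then 1 + 2 * (i div 4) +
                (if is_active (i div 4) s then 1 - i mod 4 div 2 else i mod 4 div 2)
         else 10 + 10 * e + i)
      else if i = 8 then 5 else 10 + 10 * e + i)"

declare label.simps [simp del]

definition beeps :: "state \<Rightarrow> nat set" where
  "beeps s = {l. (l = 1 \<and> root1 s) \<or> (l = 3 \<and> root2 s) \<or>
     (l = 5 \<and> \<not> halted s \<and> ((\<not> root1 s \<and> active1 s) \<or> (\<not> root2 s \<and> active2 s)))}"

definition step :: "state \<Rightarrow> nat set \<Rightarrow> state" where
  "step s R =
     (if halted s then s
      else if 5 \<notin> R then
        State (root1 s) (root2 s) (pdir1 s) (pdir2 s) (active1 s) (active2 s) (prefer1 s) True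
      else
        (let b1 = (\<not> root1 s \<and> 1 \<notin> R); b2 = (\<not> root2 s \<and> 3 \<notin> R) in
         State (root1 s) (root2 s) (pdir1 s) (pdir2 s) (active1 s \<and> \<not> b1) (active2 s \<and> \<not> b2)
           (if b1 = b2 then prefer1 s else b2) False))"

text \<open>Keeps the initial state in the finite state set for arbitrary inputs; actual parent
  directions are already below 6.\<close>
definition clamp_dir :: "nat option \<Rightarrow> nat" where
  "clamp_dir d = (case d of None \<Rightarrow> 0 | Some d \<Rightarrow> if d < 6 then d else 0)"

fun init_state :: "local_inp \<Rightarrow> state" where
  "init_state (nb, in1, in2, d1, d2, ld) =
     State in1 in2 (clamp_dir d1) (clamp_dir d2) True True True False"

definition merge_alg :: alg where
  "merge_alg =
     \<lparr>Q = to_nat ` {s. pdir1 s < 6 \<and> pdir2 s < 6}, npins = 9,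
      init = (\<lambda>x. to_nat (init_state x)),
      part = (\<lambda>q p. label (from_nat q) p), beep = (\<lambda>q. beeps (from_nat q)),
      trans = (\<lambda>q R. to_nat (step (from_nat q) R)), final = (\<lambda>q. halted (from_nat q)),
      outdir = (\<lambda>q. if prefer1 (from_nat q) then pdir1 (from_nat q) else pdir2 (from_nat q))\<rparr>"

lemma finite_bounded_states: "finite {s. pdir1 s < 6 \<and> pdir2 s < 6}"
proof -
  have "{s. pdir1 s < 6 \<and> pdir2 s < 6} \<subseteq>
      (\<lambda>(a, b, c, d, e, f, g, h). State a b c d e f g h) `
        (UNIV \<times> UNIV \<times> {..<6} \<times> {..<6} \<times> UNIV \<times> UNIV \<times> UNIV \<times> UNIV)"
    by (auto intro!: image_eqI[where x = "(root1 s, root2 s, pdir1 s, pdir2 s,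
          active1 s, active2 s, prefer1 s, halted s)" for s])
  then show ?thesis
    by (rule finite_subset) auto
qed

lemma valid_merge_alg: "valid_alg merge_alg"
  unfolding valid_alg_def merge_alg_def
  using finite_bounded_states
  by (auto simp: clamp_dir_def step_def Let_def split: option.splits)

lemma valid_pin_merge_alg:
  "valid_pin merge_alg X u p \<longleftrightarrow> u \<in> X \<and> fst p < 6 \<and> nbr u (fst p) \<in> X \<and> snd p < 9"
  unfolding valid_pin_def merge_alg_def by simp

lemma init_merge_alg: "init merge_alg x = to_nat (init_state x)"
  and trans_merge_alg: "trans merge_alg q R = to_nat (step (from_nat q) R)"
  by (simp_all add: merge_alg_def)

lemma pin_code_decode [simp]:
  assumes "(f::nat) < 2" "(L::nat) < 2" "(b::nat) < 2"
  shows "(4 * f + 2 * L + b) div 4 = f" "(4 * f + 2 * L + b) mod 4 div 2 = L"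
    "(4 * f + 2 * L + b) mod 2 = b" "4 * f + 2 * L + b < 8"
  using assms by (auto dest!: less_2_cases)

lemma pin_code_cases:
  assumes "(i::nat) < 8"
  obtains f L b where "f < 2" "L < 2" "b < 2" "i = 4 * f + 2 * L + b"
proof -
  have "i = 4 * (i div 4) + 2 * (i mod 4 div 2) + i mod 2" by presburger
  then show thesis using that[of "i div 4" "i mod 4 div 2" "i mod 2"] assms by auto
qed

lemma label_cases:
  assumes "i < 9"
  obtains "label s (e, i) \<le> 4"
    | "label s (e, i) = 5" "i = 8"
    | "label s (e, i) = 10 + 10 * e + i" "i \<noteq> 8"
proof (cases "i < 8")
  case True
  then obtain f L b where "f < 2" "L < 2" "b < 2" "i = 4 * f + 2 * L + b"
    by (rule pin_code_cases)
  then have "label s (e, i) \<le> 4 \<or> label s (e, i) = 10 + 10 * e + i"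
    by (auto dest!: less_2_cases simp: label.simps)
  then show thesis using that True by auto
next
  case False
  then show thesis using that assms by (auto simp: label.simps)
qed

lemma label_global: "label s (e, 8) = 5"
  by (simp add: label.simps)

definition hub_pin :: "nat \<Rightarrow> nat \<Rightarrow> nat \<Rightarrow> nat \<times> nat" where
  "hub_pin f L e = (e, 4 * f + 2 * L + side e)"

lemma label_hub_pin: "f < 2 \<Longrightarrow> L < 2 \<Longrightarrow> label s (hub_pin f L e) = 1 + 2 * f + L"
  by (simp add: hub_pin_def side_less label.simps)

lemma fst_hub_pin [simp]: "fst (hub_pin f L e) = e"
  by (simp add: hub_pin_def)

lemma valid_pin_hub_pin:
  "f < 2 \<Longrightarrow> L < 2 \<Longrightarrow>
     valid_pin merge_alg X w (hub_pin f L e) \<longleftrightarrow> w \<in> X \<and> e < 6 \<and> nbr w e \<in> X"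
proof -
  assume "f < 2" "L < 2"
  then have "4 * f + 2 * L + side e < 8" using side_less by simp
  then show ?thesis by (simp add: valid_pin_merge_alg hub_pin_def)
qed

definition flip :: "bool \<Rightarrow> nat \<Rightarrow> nat" where
  "flip b L = (if b then 1 - L else L)"

lemma flip_False [simp]: "flip False L = L"
  by (simp add: flip_def)

lemma flip_less: "L < 2 \<Longrightarrow> flip b L < 2"
  unfolding flip_def by auto

lemma flip_flip: "L < 2 \<Longrightarrow> flip b (flip c L) = flip (b \<noteq> c) L"
  by (auto simp: flip_def)

lemma rtranclp_pin_step_valid:
  "(pin_step A X \<sigma>)\<^sup>*\<^sup>* a b \<Longrightarrow> valid_pin A X (fst a) (snd a) \<Longrightarrow> valid_pin A X (fst b) (snd b)"
  by (induction rule: rtranclp_induct) (auto simp: pin_step_def)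

section \<open>Circuits of a phase\<close>

locale two_forests =
  fixes X S1 S2 p1 p2
  assumes conn: "connected_in X" and fin: "finite X"
    and sub1: "S1 \<subseteq> X" and sub2: "S2 \<subseteq> X"
    and spf1: "is_SPF X S1 p1" and spf2: "is_SPF X S2 p2"
begin

definition roots :: "nat \<Rightarrow> node set" where
  "roots f = (if f = 0 then S1 else S2)"

definition parent :: "nat \<Rightarrow> node \<Rightarrow> node" where
  "parent f = (if f = 0 then p1 else p2)"

abbreviation depth :: "nat \<Rightarrow> node \<Rightarrow> nat" where
  "depth f \<equiv> forest_depth (roots f) (parent f)"

lemma roots_simps [simp]: "roots 0 = S1" "roots (Suc 0) = S2"
  by (simp_all add: roots_def)

lemma is_SPF_roots: "is_SPF X (roots f) (parent f)"
  unfolding roots_def parent_def using spf1 spf2 by simp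

definition parent_dir :: "nat \<Rightarrow> node \<Rightarrow> nat" where
  "parent_dir f w = (if w \<in> roots f then 0 else dir_of w (parent f w))"

lemma parent_dir:
  assumes "w \<in> X - roots f"
  shows "parent_dir f w < 6" "nbr w (parent_dir f w) = parent f w" "parent f w \<in> X"
    "depth f w = Suc (depth f (parent f w))"
  using is_SPF_parent[OF is_SPF_roots assms] dir_of_nbr forest_depth_parent[OF is_SPF_roots assms]
    assms
  by (auto simp: parent_dir_def)

definition phase_state :: "nat \<Rightarrow> bool \<Rightarrow> node \<Rightarrow> state" where
  "phase_state t h w =
     State (w \<in> S1) (w \<in> S2) (parent_dir 0 w) (parent_dir 1 w)
       (2 ^ t dvd depth 0 w) (2 ^ t dvd depth 1 w)
       (take_bit t (depth 0 w) \<le> take_bit t (depth 1 w)) h"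

lemma phase_state_forest:
  assumes "f < 2"
  shows "is_root f (phase_state t h w) \<longleftrightarrow> w \<in> roots f"
    "par_dir f (phase_state t h w) = parent_dir f w"
    "is_active f (phase_state t h w) \<longleftrightarrow> 2 ^ t dvd depth f w"
  using less_2_cases[OF assms]
  by (auto simp: phase_state_def is_root_def par_dir_def is_active_def roots_def parent_def)

text \<open>Along every circuit of phase t, the lane of a pin, flipped by bit t of the depth of the
  amoebot whose hub the pin's link is attached to, is invariant: the lanes cross exactly at the
  active amoebots, whose depth is a multiple of 2 ^ t.\<close>
fun pin_parity :: "nat \<Rightarrow> node \<times> nat \<times> nat \<Rightarrow> (nat \<times> bool) option" where
  "pin_parity t (w, e, i) =
     (if i < 8 then
        Some (i div 4, (i mod 4 div 2 = 1) \<noteq>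
                 bit (depth (i div 4) (if i mod 2 = side e then w else nbr w e)) t)
      else None)"

lemma pin_parity_hub:
  assumes w: "w \<in> X" and i: "i < 9" and hub: "label (phase_state t h w) (e, i) \<le> 4"
  obtains f L where "f < 2" "L < 2" "label (phase_state t h w) (e, i) = 1 + 2 * f + L"
    "pin_parity t (w, e, i) = Some (f, (L = 1) \<noteq> bit (depth f w) t)"
proof -
  let ?s = "phase_state t h w"
  have "i < 8" using hub i label_global by (cases "i = 8") auto
  then obtain f L b where fL: "f < 2" "L < 2" "b < 2" and i_code: "i = 4 * f + 2 * L + b"
    by (rule pin_code_cases)
  note st = phase_state_forest[OF fL(1), of t h w]
  consider "b = side e"
    | "b \<noteq> side e" "w \<in> X - roots f" "e = parent_dir f w"
    | "b \<noteq> side e" "\<not> (w \<in> X - roots f \<and> e = parent_dir f w)"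
    by blast
  then show thesis
  proof cases
    case 1
    then show thesis using that[OF fL(1,2)] fL unfolding i_code by (simp add: label.simps)
  next
    case 2
    define L' where "L' = flip (2 ^ t dvd depth f w) L"
    have "label ?s (e, i) = 1 + 2 * f + L'"
      using 2 st fL unfolding i_code L'_def flip_def by (simp add: label.simps)
    moreover
    have "bit (depth f w) t \<longleftrightarrow> (2 ^ t dvd depth f w) \<noteq> bit (depth f (parent f w)) t"
      using parent_dir(4)[OF 2(2)] bit_Suc_nat_iff by simp
    then have "((L = 1) \<noteq> bit (depth f (parent f w)) t) = ((L' = 1) \<noteq> bit (depth f w) t)"
      using less_2_cases[OF fL(2)] unfolding L'_def flip_def by auto
    then have "pin_parity t (w, e, i) = Some (f, (L' = 1) \<noteq> bit (depth f w) t)"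
      using 2 fL parent_dir(2)[OF 2(2)] unfolding i_code by simp
    moreover have "L' < 2" using fL flip_less unfolding L'_def by auto
    ultimately show thesis using that fL(1) by blast
  next
    case 3
    then have "label ?s (e, i) = 10 + 10 * e + i"
      using st w fL unfolding i_code by (auto simp: label.simps)
    then show thesis using hub by simp
  qed
qed

lemma pin_parity_same_label:
  assumes w: "w \<in> X" and i: "i < 9" "i' < 9"
    and same: "label (phase_state t h w) (e, i) = label (phase_state t h w) (e', i')"
  shows "pin_parity t (w, e, i) = pin_parity t (w, e', i')"
  using label_cases[OF i(1), of "phase_state t h w" e]
proof cases
  case 1
  obtain f L where f: "f < 2" "L < 2" "label (phase_state t h w) (e, i) = 1 + 2 * f + L"
      "pin_parity t (w, e, i) = Some (f, (L = 1) \<noteq> bit (depth f w) t)"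
    using pin_parity_hub[OF w i(1) 1] .
  obtain f' L' where f': "f' < 2" "L' < 2" "label (phase_state t h w) (e', i') = 1 + 2 * f' + L'"
      "pin_parity t (w, e', i') = Some (f', (L' = 1) \<noteq> bit (depth f' w) t)"
    using pin_parity_hub[OF w i(2)] 1 same by metis
  have "f = f' \<and> L = L'" using f f' same by presburger
  then show ?thesis using f(4) f'(4) by simp
next
  case 2
  have "i' = 8"
    by (rule label_cases[OF i(2), of "phase_state t h w" e']) (use 2 same in auto)
  then show ?thesis using 2 by simp
next
  case 3
  have "10 * e + i = 10 * e' + i'"
    by (rule label_cases[OF i(2), of "phase_state t h w" e']) (use 3 same in auto)
  then have "i = i' \<and> e = e'" using i by presburger
  then show ?thesis by simp
qed

lemma pin_parity_link:
  assumes "e < 6"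
  shows "pin_parity t (w, e, i) = pin_parity t (nbr w e, opp e, i)"
proof -
  have "side (opp e) \<noteq> side e" "i mod 2 \<noteq> side e \<Longrightarrow> i mod 2 = side (opp e)"
    using side_opp[OF assms] side_less[of e] by arith+
  then show ?thesis
    using nbr_nbr_opp[OF assms] by (cases "i mod 2 = side e") auto
qed

lemma beeps_hub:
  assumes "f < 2" "L < 2"
  shows "1 + 2 * f + L \<in> beeps (phase_state t h w) \<longleftrightarrow> L = 0 \<and> w \<in> roots f"
  using less_2_cases[OF assms(1)] less_2_cases[OF assms(2)]
  by (auto simp: beeps_def phase_state_def roots_def)

definition pending :: "nat \<Rightarrow> bool" where
  "pending t \<longleftrightarrow> (\<exists>f<2. \<exists>v\<in>X - roots f. 2 ^ t dvd depth f v)"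

lemma beeps_global:
  "5 \<in> beeps (phase_state t h v) \<longleftrightarrow> \<not> h \<and> (\<exists>f<2. v \<notin> roots f \<and> 2 ^ t dvd depth f v)"
  by (auto simp: beeps_def phase_state_def roots_def less_2_cases_iff)

context
  fixes t h \<sigma>
  assumes phase: "\<And>w. w \<in> X \<Longrightarrow> from_nat (\<sigma> w) = phase_state t h w"
begin

abbreviation connects :: "node \<times> nat \<times> nat \<Rightarrow> node \<times> nat \<times> nat \<Rightarrow> bool" where
  "connects \<equiv> (pin_step merge_alg X \<sigma>)\<^sup>*\<^sup>*"

lemma part_phase: "w \<in> X \<Longrightarrow> part merge_alg (\<sigma> w) p = label (phase_state t h w) p"
  using phase by (simp add: merge_alg_def)

lemma beep_phase: "w \<in> X \<Longrightarrow> beep merge_alg (\<sigma> w) = beeps (phase_state t h w)"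
  using phase by (simp add: merge_alg_def)

lemma pin_step_phase:
  "pin_step merge_alg X \<sigma> (w, p) (w', p') \<longleftrightarrow>
     valid_pin merge_alg X w p \<and> valid_pin merge_alg X w' p' \<and>
     ((w = w' \<and> label (phase_state t h w) p = label (phase_state t h w) p') \<or>
      (w' = nbr w (fst p) \<and> fst p' = opp (fst p) \<and> snd p' = snd p))"
  unfolding pin_step_def valid_pin_merge_alg by (auto simp: part_phase)

lemma received_phase:
  "l \<in> received merge_alg X \<sigma> u \<longleftrightarrow>
     (\<exists>p v q. valid_pin merge_alg X u p \<and> label (phase_state t h u) p = l \<and>
        connects (u, p) (v, q) \<and> valid_pin merge_alg X v q \<and>
        label (phase_state t h v) q \<in> beeps (phase_state t h v))"
proof
  assume "l \<in> received merge_alg X \<sigma> u"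
  then obtain p v q where p: "valid_pin merge_alg X u p" "part merge_alg (\<sigma> u) p = l"
      "connects (u, p) (v, q)" "part merge_alg (\<sigma> v) q \<in> beep merge_alg (\<sigma> v)"
    unfolding received_def by blast
  moreover have q: "valid_pin merge_alg X v q"
    using rtranclp_pin_step_valid[OF p(3)] p(1) by simp
  moreover have "u \<in> X" "v \<in> X"
    using p(1) q by (simp_all add: valid_pin_def)
  then have "label (phase_state t h u) p = l"
    "label (phase_state t h v) q \<in> beeps (phase_state t h v)"
    using p(2,4) part_phase beep_phase by simp_all
  ultimately show "\<exists>p v q. valid_pin merge_alg X u p \<and> label (phase_state t h u) p = l \<and>
      connects (u, p) (v, q) \<and> valid_pin merge_alg X v q \<and>
      label (phase_state t h v) q \<in> beeps (phase_state t h v)"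
    by blast
next
  assume "\<exists>p v q. valid_pin merge_alg X u p \<and> label (phase_state t h u) p = l \<and>
      connects (u, p) (v, q) \<and> valid_pin merge_alg X v q \<and>
      label (phase_state t h v) q \<in> beeps (phase_state t h v)"
  then obtain p v q where p: "valid_pin merge_alg X u p" "label (phase_state t h u) p = l"
      "connects (u, p) (v, q)" "valid_pin merge_alg X v q"
      "label (phase_state t h v) q \<in> beeps (phase_state t h v)"
    by blast
  moreover have "u \<in> X" "v \<in> X"
    using p(1,4) by (simp_all add: valid_pin_def)
  then have "part merge_alg (\<sigma> u) p = l"
    "part merge_alg (\<sigma> v) q \<in> beep merge_alg (\<sigma> v)"
    using p(2,5) part_phase beep_phase by simp_all
  ultimately show "l \<in> received merge_alg X \<sigma> u"
    unfolding received_def by blast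
qed

lemma pin_parity_connects:
  assumes "connects a b"
  shows "pin_parity t a = pin_parity t b"
  using assms
proof (induction rule: rtranclp_induct)
  case base
  then show ?case ..
next
  case (step b c)
  obtain w e i w' e' i' where bc: "b = (w, e, i)" "c = (w', e', i')"
    by (metis prod_cases3)
  have valid: "w \<in> X" "e < 6" "i < 9" "i' < 9"
    using step.hyps(2) unfolding bc pin_step_phase valid_pin_merge_alg by auto
  have "(w = w' \<and> label (phase_state t h w) (e, i) = label (phase_state t h w) (e', i')) \<or>
      (w' = nbr w e \<and> e' = opp e \<and> i' = i)"
    using step.hyps(2) unfolding bc pin_step_phase by simp
  then have "pin_parity t b = pin_parity t c"
  proof (elim disjE conjE)
    assume "w = w'" and same: "label (phase_state t h w) (e, i) = label (phase_state t h w) (e', i')"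
    then show ?thesis
      unfolding bc using pin_parity_same_label[OF valid(1,3,4) same] by (simp only:)
  next
    assume "w' = nbr w e" "e' = opp e" "i' = i"
    then show ?thesis
      unfolding bc using pin_parity_link[OF valid(2), of t w i] by (simp only:)
  qed
  with step.IH show ?case by (rule trans)
qed

lemma pin_step_hub_pins:
  assumes "w \<in> X" "e < 6" "nbr w e \<in> X" "e' < 6" "nbr w e' \<in> X" "f < 2" "L < 2"
  shows "pin_step merge_alg X \<sigma> (w, hub_pin f L e) (w, hub_pin f L e')"
  using assms label_hub_pin valid_pin_hub_pin by (simp add: pin_step_phase)

lemma connects_hub_pin_parent:
  assumes w: "w \<in> X - roots f" and fL: "f < 2" "L < 2"
  shows "connects (w, hub_pin f L (parent_dir f w))
           (parent f w, hub_pin f (flip (2 ^ t dvd depth f w) L) (opp (parent_dir f w)))"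
proof -
  define e L' b where "e = parent_dir f w" and "L' = flip (2 ^ t dvd depth f w) L"
    and "b = 1 - side e"
  define i where "i = 4 * f + 2 * L' + b"
  note pd = parent_dir(1-3)[OF w, folded e_def]
  have L': "L' < 2" using fL flip_less unfolding L'_def by auto
  have b: "b \<noteq> side e" "b < 2" using side_less[of e] unfolding b_def by arith+
  have i: "i < 9" using fL L' b unfolding i_def by simp
  have "label (phase_state t h w) (e, i) = 1 + 2 * f + L"
    using w fL L' b phase_state_forest[OF fL(1)] unfolding i_def e_def L'_def
    by (auto simp: flip_def label.simps)
  moreover have "valid_pin merge_alg X w (hub_pin f L e)"
    using pd w valid_pin_hub_pin[OF fL] by simp
  moreover have "valid_pin merge_alg X w (e, i)"
    using pd w i valid_pin_merge_alg by simp
  ultimately have to_link: "pin_step merge_alg X \<sigma> (w, hub_pin f L e) (w, (e, i))"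
    using label_hub_pin fL unfolding pin_step_phase by simp
  have "nbr (parent f w) (opp e) = w"
    using nbr_nbr_opp[OF pd(1), of w] pd(2) by simp
  then have across: "pin_step merge_alg X \<sigma> (w, (e, i)) (parent f w, (opp e, i))"
    using pd w i opp_less unfolding pin_step_phase valid_pin_merge_alg by simp
  have "connects (w, hub_pin f L e) (parent f w, (opp e, i))"
    using to_link across by (rule converse_rtranclp_into_rtranclp[OF _ r_into_rtranclp])
  moreover have "hub_pin f L' (opp e) = (opp e, i)"
    using side_opp[OF pd(1)] unfolding hub_pin_def i_def b_def by simp
  ultimately have "connects (w, hub_pin f L e) (parent f w, hub_pin f L' (opp e))"
    by (simp only:)
  then show ?thesis unfolding e_def L'_def .
qed

lemma connects_hub_pin_root:
  assumes "w \<in> X" "e < 6" "nbr w e \<in> X" "f < 2" "L < 2"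
  shows "\<exists>r e'. r \<in> roots f \<and> e' < 6 \<and> nbr r e' \<in> X \<and>
    connects (w, hub_pin f L e) (r, hub_pin f (flip (bit (depth f w) t) L) e')"
  using assms
proof (induction "depth f w" arbitrary: w e L)
  case 0
  then have "w \<in> roots f" using forest_depth_eq_0_iff[OF is_SPF_roots, of w f] by simp
  then show ?case
    using 0 by (intro exI[of _ w] exI[of _ e]) (simp add: 0(1)[symmetric])
next
  case (Suc n)
  then have w: "w \<in> X - roots f"
    using forest_depth_root[of w "roots f" "parent f"] by auto
  note pd = parent_dir[OF w]
  define L' where "L' = flip (2 ^ t dvd depth f w) L"
  have L': "L' < 2" using Suc.prems(5) flip_less unfolding L'_def by auto
  have "connects (w, hub_pin f L e) (w, hub_pin f L (parent_dir f w))"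
    using pin_step_hub_pins[OF Suc.prems(1-3) pd(1) _ Suc.prems(4,5)] pd(2,3) by simp
  also have "connects \<dots> (parent f w, hub_pin f L' (opp (parent_dir f w)))"
    using connects_hub_pin_parent[OF w Suc.prems(4,5)] unfolding L'_def .
  finally have to_parent:
    "connects (w, hub_pin f L e) (parent f w, hub_pin f L' (opp (parent_dir f w)))" .
  have n: "n = depth f (parent f w)" using Suc.hyps(2) pd(4) by simp
  have "nbr (parent f w) (opp (parent_dir f w)) \<in> X"
    using nbr_nbr_opp[OF pd(1), of w] pd(2) w by simp
  then obtain r e' where r: "r \<in> roots f" "e' < 6" "nbr r e' \<in> X"
      "connects (parent f w, hub_pin f L' (opp (parent_dir f w)))
         (r, hub_pin f (flip (bit (depth f (parent f w)) t) L') e')"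
    using Suc.hyps(1)[OF n pd(3) opp_less _ Suc.prems(4) L'] by blast
  have "flip (bit (depth f (parent f w)) t) L' = flip (bit (depth f w) t) L"
  proof -
    have "bit (depth f w) t \<longleftrightarrow> (2 ^ t dvd depth f w) \<noteq> bit (depth f (parent f w)) t"
      using pd(4) bit_Suc_nat_iff by simp
    then show ?thesis
      unfolding L'_def flip_flip[OF Suc.prems(5)] by (simp only:) auto
  qed
  then have "connects (parent f w, hub_pin f L' (opp (parent_dir f w)))
      (r, hub_pin f (flip (bit (depth f w) t) L) e')"
    using r(4) by (simp only:)
  with to_parent have "connects (w, hub_pin f L e) (r, hub_pin f (flip (bit (depth f w) t) L) e')"
    by (rule rtranclp_trans)
  then show ?case using r(1-3) by (intro exI[of _ r] exI[of _ e']) simp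
qed

lemma received_hub_imp_not_bit:
  assumes "f < 2" "1 + 2 * f \<in> received merge_alg X \<sigma> u"
  shows "\<not> bit (depth f u) t"
proof -
  obtain e i v e' i' where p: "valid_pin merge_alg X u (e, i)"
      "label (phase_state t h u) (e, i) = 1 + 2 * f" "connects (u, e, i) (v, e', i')"
      "valid_pin merge_alg X v (e', i')"
      "label (phase_state t h v) (e', i') \<in> beeps (phase_state t h v)"
    using assms(2) unfolding received_phase by auto
  have u_parity: "pin_parity t (u, e, i) = Some (f, bit (depth f u) t)"
  proof -
    obtain f0 L where f0: "f0 < 2" "L < 2" "label (phase_state t h u) (e, i) = 1 + 2 * f0 + L"
        "pin_parity t (u, e, i) = Some (f0, (L = 1) \<noteq> bit (depth f0 u) t)"
      using pin_parity_hub[of u i t h e] p(1,2) assms(1) unfolding valid_pin_merge_alg by auto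
    then have "f0 = f \<and> L = 0" using p(2) by presburger
    then show ?thesis using f0(4) by simp
  qed
  have parity: "pin_parity t (v, e', i') = Some (f, bit (depth f u) t)"
    using pin_parity_connects[OF p(3)] u_parity by simp
  have v: "v \<in> X" "i' < 9" using p(4) unfolding valid_pin_merge_alg by auto
  let ?l = "label (phase_state t h v) (e', i')"
  show ?thesis
  proof (rule label_cases[OF v(2), of "phase_state t h v" e'])
    assume "?l \<le> 4"
    then obtain f' L where f': "f' < 2" "L < 2" "?l = 1 + 2 * f' + L"
        "pin_parity t (v, e', i') = Some (f', (L = 1) \<noteq> bit (depth f' v) t)"
      using pin_parity_hub[OF v] by blast
    then have "L = 0 \<and> v \<in> roots f'" using p(5) beeps_hub by simp
    then show ?thesis using f'(4) parity forest_depth_root by auto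
  next
    assume "i' = 8"
    then show ?thesis using parity by simp
  next
    assume "?l = 10 + 10 * e' + i'"
    then show ?thesis using p(5) by (simp add: beeps_def)
  qed
qed

lemma not_bit_imp_received_hub:
  assumes f: "f < 2" and u: "u \<in> X - roots f" and not_bit: "\<not> bit (depth f u) t"
  shows "1 + 2 * f \<in> received merge_alg X \<sigma> u"
proof -
  note pd = parent_dir[OF u]
  obtain r e' where r: "r \<in> roots f" "e' < 6" "nbr r e' \<in> X"
      "connects (u, hub_pin f 0 (parent_dir f u)) (r, hub_pin f (flip (bit (depth f u) t) 0) e')"
    using connects_hub_pin_root[of u "parent_dir f u" f 0] u pd f by auto
  have "r \<in> X" using r(1) sub1 sub2 by (auto simp: roots_def split: if_splits)
  then have "valid_pin merge_alg X u (hub_pin f 0 (parent_dir f u))"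
      "valid_pin merge_alg X r (hub_pin f 0 e')"
    using u pd r(2,3) valid_pin_hub_pin f by simp_all
  moreover have "label (phase_state t h u) (hub_pin f 0 (parent_dir f u)) = 1 + 2 * f"
      "label (phase_state t h r) (hub_pin f 0 e') \<in> beeps (phase_state t h r)"
    using label_hub_pin[of f 0] beeps_hub[of f 0] f r(1) by simp_all
  moreover have "connects (u, hub_pin f 0 (parent_dir f u)) (r, hub_pin f 0 e')"
    using r(4) not_bit by simp
  ultimately show ?thesis
    unfolding received_phase by blast
qed

lemma connects_global_pins:
  assumes "walk_in X xs" "e' < 6" "nbr (last xs) e' \<in> X"
  shows "\<exists>e<6. nbr (hd xs) e \<in> X \<and> connects (hd xs, e, 8) (last xs, e', 8)"
  using assms
proof (induction xs)
  case Nil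
  then show ?case by (simp add: walk_in_def)
next
  case (Cons x xs)
  show ?case
  proof (cases "xs = []")
    case True
    then show ?thesis using Cons.prems(2,3) by auto
  next
    case False
    then obtain y ys where xs: "xs = y # ys" by (cases xs) auto
    then have x: "x \<in> X" "grid_adj x y" and walk: "walk_in X xs"
      using Cons.prems(1) walk_in_Cons_Cons by auto
    then obtain d where d: "d < 6" "y = nbr x d" unfolding grid_adj_def by blast
    have y: "y \<in> X" "nbr y (opp d) = x" using walk xs d nbr_nbr_opp by (auto simp: walk_in_def)
    obtain e where e: "e < 6" "nbr y e \<in> X" "connects (y, e, 8) (last xs, e', 8)"
      using Cons.IH walk Cons.prems(2,3) False xs by auto
    have "pin_step merge_alg X \<sigma> (x, d, 8) (y, opp d, 8)"
      using x y d opp_less unfolding pin_step_phase valid_pin_merge_alg by simp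
    moreover have "pin_step merge_alg X \<sigma> (y, opp d, 8) (y, e, 8)"
      using x y e opp_less label_global unfolding pin_step_phase valid_pin_merge_alg by simp
    ultimately have "connects (x, d, 8) (last xs, e', 8)"
      using e(3) by (meson converse_rtranclp_into_rtranclp)
    then show ?thesis using d x y False by auto
  qed
qed

lemma received_global_iff:
  assumes u: "u \<in> X"
  shows "5 \<in> received merge_alg X \<sigma> u \<longleftrightarrow> (\<exists>v\<in>X. 5 \<in> beeps (phase_state t h v))"
proof
  assume "5 \<in> received merge_alg X \<sigma> u"
  then obtain e i v e' i' where p: "valid_pin merge_alg X u (e, i)"
      "label (phase_state t h u) (e, i) = 5" "connects (u, e, i) (v, e', i')"
      "valid_pin merge_alg X v (e', i')"
      "label (phase_state t h v) (e', i') \<in> beeps (phase_state t h v)"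
    unfolding received_phase by auto
  have i: "i < 9" "i' < 9" "v \<in> X" using p(1,4) unfolding valid_pin_merge_alg by auto
  have "i = 8"
    by (rule label_cases[OF i(1), of "phase_state t h u" e]) (use p(2) in auto)
  then have "pin_parity t (v, e', i') = None"
    using pin_parity_connects[OF p(3)] by simp
  then have "i' = 8" using i(2) by (simp split: if_splits)
  then show "\<exists>v\<in>X. 5 \<in> beeps (phase_state t h v)"
    using p(5) i(3) label_global by auto
next
  assume "\<exists>v\<in>X. 5 \<in> beeps (phase_state t h v)"
  then obtain v f where v: "v \<in> X" "5 \<in> beeps (phase_state t h v)" "f < 2" "v \<notin> roots f"
    using beeps_global by blast
  note pd = parent_dir[of v f]
  obtain xs where "walk_in X xs" "hd xs = u" "last xs = v"
    using conn u v(1) unfolding connected_in_def by blast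
  then obtain e where e: "e < 6" "nbr u e \<in> X" "connects (u, e, 8) (v, parent_dir f v, 8)"
    using connects_global_pins[of xs "parent_dir f v"] pd v by auto
  moreover have "valid_pin merge_alg X u (e, 8)" "valid_pin merge_alg X v (parent_dir f v, 8)"
    using u v e pd unfolding valid_pin_merge_alg by auto
  moreover have "label (phase_state t h u) (e, 8) = 5"
    "label (phase_state t h v) (parent_dir f v, 8) \<in> beeps (phase_state t h v)"
    using v(2) label_global by simp_all
  ultimately show "5 \<in> received merge_alg X \<sigma> u"
    unfolding received_phase by blast
qed

lemma hub_silent_iff_bit:
  assumes "f < 2" "w \<in> X"
  shows "w \<notin> roots f \<and> 1 + 2 * f \<notin> received merge_alg X \<sigma> w \<longleftrightarrow> bit (depth f w) t"
proof (cases "w \<in> roots f")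
  case True
  then show ?thesis using forest_depth_root[of w "roots f" "parent f"] by simp
next
  case False
  then show ?thesis
    using received_hub_imp_not_bit[OF assms(1), of w] not_bit_imp_received_hub[OF assms(1), of w]
      assms(2)
    by blast
qed

lemma step_phase_state:
  assumes w: "w \<in> X" and h: "\<not> h"
  shows "step (phase_state t h w) (received merge_alg X \<sigma> w) =
    (if pending t then phase_state (Suc t) False w else phase_state t True w)"
proof -
  let ?R = "received merge_alg X \<sigma> w"
  have "5 \<in> ?R \<longleftrightarrow> pending t"
    using received_global_iff[OF w] beeps_global h unfolding pending_def by auto
  moreover have "w \<notin> S1 \<and> 1 \<notin> ?R \<longleftrightarrow> bit (depth 0 w) t"
    using hub_silent_iff_bit[of 0 w] w by simp
  moreover have "w \<notin> S2 \<and> 3 \<notin> ?R \<longleftrightarrow> bit (depth 1 w) t"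
    using hub_silent_iff_bit[of 1 w] w by (simp add: roots_def numeral_3_eq_3)
  ultimately show ?thesis
    using h unfolding step_def phase_state_def
    by (simp add: Let_def exp_Suc_dvd_iff_bit[unfolded power_Suc] take_bit_Suc_le_iff)
qed

end

section \<open>Phases and running time\<close>

lemma step_halted: "step (phase_state t True w) R = phase_state t True w"
  by (simp add: step_def phase_state_def)

lemma depth_less_card: "w \<in> X \<Longrightarrow> depth f w < card X"
  using forest_depth_less_card[OF is_SPF_roots fin] .

lemma pending_iff: "pending t \<longleftrightarrow> (\<exists>f<2. \<exists>v\<in>X. 2 ^ t \<le> depth f v)"
proof
  assume "pending t"
  then obtain f v where v: "f < 2" "v \<in> X - roots f" "2 ^ t dvd depth f v"
    unfolding pending_def by blast
  then have "depth f v \<noteq> 0" using forest_depth_eq_0_iff[OF is_SPF_roots] by blast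
  then show "\<exists>f<2. \<exists>v\<in>X. 2 ^ t \<le> depth f v" using v dvd_imp_le by blast
next
  assume "\<exists>f<2. \<exists>v\<in>X. 2 ^ t \<le> depth f v"
  then obtain f v where v: "f < 2" "v \<in> X" "2 ^ t \<le> depth f v" by blast
  define a where "a = (parent f ^^ (depth f v - 2 ^ t)) v"
  have "a \<in> X \<and> depth f a = depth f v - (depth f v - 2 ^ t)"
    unfolding a_def by (rule forest_depth_funpow[OF is_SPF_roots v(2)]) simp
  then have a: "a \<in> X" "depth f a = 2 ^ t" using v(3) by simp_all
  moreover have "a \<notin> roots f" using a forest_depth_root[of a "roots f" "parent f"] by auto
  ultimately have "a \<in> X - roots f" "2 ^ t dvd depth f a" by simp_all
  then show "pending t" unfolding pending_def using v(1) by blast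
qed

lemma not_pending_card: "\<not> pending (card X)"
proof
  assume "pending (card X)"
  then obtain f v where "v \<in> X" "2 ^ card X \<le> depth f v" unfolding pending_iff by blast
  then show False using depth_less_card[of v f] less_exp[of "card X"] by simp
qed

definition phases :: nat where
  "phases = (LEAST t. \<not> pending t)"

lemma not_pending_phases: "\<not> pending phases"
  unfolding phases_def using not_pending_card by (rule LeastI)

lemma pending_less_phases: "t < phases \<Longrightarrow> pending t"
  unfolding phases_def using not_less_Least by blast

lemma depth_less_exp_phases: "f < 2 \<Longrightarrow> w \<in> X \<Longrightarrow> depth f w < 2 ^ phases"
  using not_pending_phases unfolding pending_iff by (simp add: not_le)

lemma phases_bound: "real (Suc phases) \<le> 2 * (1 + log 2 (real (card X)))"
proof (cases phases)
  case 0
  have "0 \<le> log 2 (real (card X))" by (cases "card X = 0") (simp add: log_def, simp)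
  then show ?thesis using 0 by simp
next
  case (Suc j)
  then obtain f v where "f < 2" "v \<in> X" "2 ^ j \<le> depth f v"
    using pending_less_phases[of j] pending_iff by auto
  then have "2 ^ j < card X" using depth_less_card[of v f] by simp
  then have "(2::real) ^ j \<le> real (card X)"
    by (metis less_imp_le of_nat_le_iff of_nat_numeral of_nat_power)
  then have "real j \<le> log 2 (real (card X))" by (rule le_log_of_power) simp
  then show ?thesis using Suc by simp
qed

abbreviation input :: "node \<Rightarrow> node \<Rightarrow> local_inp" where
  "input ldr \<equiv> local_input X S1 S2 p1 p2 ldr"

lemma init_state_input: "w \<in> X \<Longrightarrow> init_state (input ldr w) = phase_state 0 False w"
  using parent_dir(1)[of w 0] parent_dir(1)[of w 1]
  by (auto simp: local_input_def phase_state_def clamp_dir_def parent_dir_def roots_def parent_def)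

lemma run_eq_phase_state:
  "t \<le> phases \<Longrightarrow> w \<in> X \<Longrightarrow> from_nat (run merge_alg X (input ldr) t w) = phase_state t False w"
proof (induction t arbitrary: w)
  case 0
  then show ?case by (simp add: init_merge_alg init_state_input)
next
  case (Suc t)
  then have phase: "\<And>v. v \<in> X \<Longrightarrow> from_nat (run merge_alg X (input ldr) t v) = phase_state t False v"
    by simp
  show ?case
    using step_phase_state[OF phase Suc.prems(2)] pending_less_phases Suc.prems(1)
    by (simp add: trans_merge_alg phase[OF Suc.prems(2)])
qed

lemma run_eq_halted_state:
  "w \<in> X \<Longrightarrow> from_nat (run merge_alg X (input ldr) (Suc phases + k) w) = phase_state phases True w"
proof (induction k arbitrary: w)
  case 0
  have phase: "\<And>v. v \<in> X \<Longrightarrow> from_nat (run merge_alg X (input ldr) phases v) = phase_state phases False v"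
    using run_eq_phase_state by simp
  show ?case
    using step_phase_state[OF phase 0] not_pending_phases
    by (simp add: trans_merge_alg phase[OF 0])
next
  case (Suc k)
  then show ?case by (simp add: trans_merge_alg step_halted)
qed

lemma outdir_phase_state:
  assumes "from_nat q = phase_state phases h u" "u \<in> X - (S1 \<union> S2)"
  shows "nbr u (outdir merge_alg q) = merge_parent S1 p1 S2 p2 u"
proof -
  have "u \<in> X - roots 0" "u \<in> X - roots 1" using assms(2) by (auto simp: roots_def)
  note pd = parent_dir(2)[OF this(1)] parent_dir(2)[OF this(2)]
  have "take_bit phases (forest_depth S1 p1 u) = forest_depth S1 p1 u"
    "take_bit phases (forest_depth S2 p2 u) = forest_depth S2 p2 u"
    using depth_less_exp_phases[of 0 u] depth_less_exp_phases[of 1 u] assms(2)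
    by (simp_all add: take_bit_nat_eq_self roots_def parent_def)
  then show ?thesis
    using assms(1) pd by (simp add: merge_alg_def phase_state_def merge_parent_def parent_def)
qed

theorem merge_alg_correct:
  "\<exists>T::nat. real T \<le> 2 * (1 + log 2 (real (card X))) \<and>
     (\<forall>t\<ge>T. (\<forall>u\<in>X. final merge_alg (run merge_alg X (input ldr) t u)) \<and>
        is_SPF X (S1 \<union> S2) (\<lambda>u. nbr u (outdir merge_alg (run merge_alg X (input ldr) t u))))"
proof (intro exI[of _ "Suc phases"] conjI allI impI)
  show "real (Suc phases) \<le> 2 * (1 + log 2 (real (card X)))" by (rule phases_bound)
  fix t assume "Suc phases \<le> t"
  then obtain k where t: "t = Suc phases + k" using le_Suc_ex by blast
  show "\<forall>u\<in>X. final merge_alg (run merge_alg X (input ldr) t u)"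
    using run_eq_halted_state unfolding t by (simp add: merge_alg_def phase_state_def)
  show "is_SPF X (S1 \<union> S2) (\<lambda>u. nbr u (outdir merge_alg (run merge_alg X (input ldr) t u)))"
    using is_SPF_merge_parent[OF conn sub1 sub2 spf1 spf2]
    by (rule is_SPF_cong) (use outdir_phase_state run_eq_halted_state in \<open>auto simp: t\<close>)
qed

end

theorem mainTheorem11:
  shows "\<exists>(A::alg) (C::real). valid_alg A \<and>
    (\<forall>X S1 S2 p1 p2 ldr.
       amoebot_structure X \<and> no_holes X \<and> ldr \<in> X \<and>
       S1 \<subseteq> X \<and> S2 \<subseteq> X \<and> S1 \<noteq> {} \<and> S2 \<noteq> {} \<and>
       is_SPF X S1 p1 \<and> is_SPF X S2 p2 \<longrightarrow>
       (\<exists>T::nat. real T \<le> C * (1 + log 2 (real (card X))) \<and>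
          (\<forall>t\<ge>T. (\<forall>u\<in>X. final A (run A X (local_input X S1 S2 p1 p2 ldr) t u)) \<and>
                  is_SPF X (S1 \<union> S2)
                    (\<lambda>u. nbr u (outdir A (run A X (local_input X S1 S2 p1 p2 ldr) t u))))))"
proof (intro exI[of _ merge_alg] exI[of _ "2::real"] conjI allI impI)
  show "valid_alg merge_alg" by (rule valid_merge_alg)
  fix X S1 S2 p1 p2 ldr
  assume "amoebot_structure X \<and> no_holes X \<and> ldr \<in> X \<and>
       S1 \<subseteq> X \<and> S2 \<subseteq> X \<and> S1 \<noteq> {} \<and> S2 \<noteq> {} \<and> is_SPF X S1 p1 \<and> is_SPF X S2 p2"
  then interpret two_forests X S1 S2 p1 p2
    by unfold_locales (auto simp: amoebot_structure_def)
  show "\<exists>T::nat. real T \<le> 2 * (1 + log 2 (real (card X))) \<and>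
      (\<forall>t\<ge>T. (\<forall>u\<in>X. final merge_alg (run merge_alg X (local_input X S1 S2 p1 p2 ldr) t u)) \<and>
        is_SPF X (S1 \<union> S2)
          (\<lambda>u. nbr u (outdir merge_alg (run merge_alg X (local_input X S1 S2 p1 p2 ldr) t u))))"
    by (rule merge_alg_correct)
qed

end
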